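(* In the setting below, suppose there is a reparametrization $\eta=\eta(\theta)$ of $\Theta$ (a twice differentiable map with twice differentiable inverse) such that for every $\theta\in\Theta$ and all $k,l$ the quantity $$\frac{\partial^2}{\partial\eta^k\partial\eta^l}f(m_\theta(a))$$ does not depend on $a\in A$. Then for all $\theta$, all $x\in{\cal F}_\theta$ and all $k,l$, $\sum_a[x(a)-m_\theta(a)]\frac{\partial^2}{\partial\theta^k\partial\theta^l}f(m_\theta(a))=0$; consequently the model belongs to a generalized exponential family, with Fisher information $I_{k,l}(\theta)=\sum_af'(m_\theta(a))\frac{\partial m_\theta(a)}{\partial\theta^k}\frac{\partial m_\theta(a)}{\partial\theta^l}$.
   Context: Setting: $A$ is a finite alphabet, ${\mathbb X}$ the set of probability distributions on $A$ with strictly positive entries, $\langle x|q\rangle=\sum_a x(a)q(a)$. $F:(0,1]\to{\mathbb R}$ is strictly convex and twice differentiable with $f=F'$. $\theta\in\Theta\mapsto m_\theta\in{\mathbb X}$ ($\Theta\subset{\mathbb R}^n$ open) is injective with $\theta\mapsto m_\theta(a)$ twice differentiable for each $a$. The Bregman divergence is $D(x\|\theta)=\sum_a[F(x(a))-F(m_\theta(a))-(x(a)-m_\theta(a))f(m_\theta(a))]$; it is assumed that for every $x\in{\mathbb X}$, $\theta\mapsto D(x\|\theta)$ has a unique minimizer $\theta(x)\in\Theta$, $\mu(x)=m_{\theta(x)}$, and ${\cal F}_\theta=\{x:\mu(x)=m_\theta\}$. The generalized Fisher information is $I_{k,l}(x)=\frac{\partial^2}{\partial\theta^k\partial\theta^l}D(x\|\theta)\big|_{m_\theta=\mu(x)}$,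 and the model belongs to a generalized exponential family if $I_{k,l}$ is constant on each fiber ${\cal F}_\theta$. *)

theory Defs
  imports "HOL-Analysis.Analysis"
begin

definition strict_convex_on :: "real set \<Rightarrow> (real \<Rightarrow> real) \<Rightarrow> bool" where
  "strict_convex_on S F \<longleftrightarrow> convex S \<and> (\<forall>x\<in>S. \<forall>y\<in>S. \<forall>u. x \<noteq> y \<longrightarrow> 0 < u \<longrightarrow> u < 1 \<longrightarrow>
      F (u * x + (1 - u) * y) < u * F x + (1 - u) * F y)"

text \<open>Parameters live in real^'n (Theta is a subset of R^n); the alphabet A is a finite type 'a.\<close>

definition partial :: "'n::finite \<Rightarrow> (real^'n \<Rightarrow> real) \<Rightarrow> real^'n \<Rightarrow> real" where
  "partial k g x = deriv (\<lambda>t. g (x + t *\<^sub>R axis k 1)) 0"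

definition twice_diff_on :: "(real^'n::finite \<Rightarrow> real) \<Rightarrow> (real^'n) set \<Rightarrow> bool" where
  "twice_diff_on g S \<longleftrightarrow> g differentiable_on S \<and> (\<forall>k. partial k g differentiable_on S)"

definition prob_simplex :: "('a::finite \<Rightarrow> real) set" where
  "prob_simplex = {x. (\<forall>a. 0 < x a) \<and> (\<Sum>a\<in>UNIV. x a) = 1}"

definition bregman_div ::
  "(real \<Rightarrow> real) \<Rightarrow> (real \<Rightarrow> real) \<Rightarrow> (real^'n::finite \<Rightarrow> 'a::finite \<Rightarrow> real)
     \<Rightarrow> ('a \<Rightarrow> real) \<Rightarrow> real^'n \<Rightarrow> real" where
  "bregman_div F f m x \<theta> =
     (\<Sum>a\<in>UNIV. F (x a) - F (m \<theta> a) - (x a - m \<theta> a) * f (m \<theta> a))"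

definition min_param ::
  "(real \<Rightarrow> real) \<Rightarrow> (real \<Rightarrow> real) \<Rightarrow> (real^'n::finite \<Rightarrow> 'a::finite \<Rightarrow> real)
     \<Rightarrow> (real^'n) set \<Rightarrow> ('a \<Rightarrow> real) \<Rightarrow> real^'n" where
  "min_param F f m \<Theta> x =
     (THE \<theta>. \<theta> \<in> \<Theta> \<and> (\<forall>\<theta>'\<in>\<Theta>. bregman_div F f m x \<theta> \<le> bregman_div F f m x \<theta>'))"

definition fiber ::
  "(real \<Rightarrow> real) \<Rightarrow> (real \<Rightarrow> real) \<Rightarrow> (real^'n::finite \<Rightarrow> 'a::finite \<Rightarrow> real)
     \<Rightarrow> (real^'n) set \<Rightarrow> real^'n \<Rightarrow> ('a \<Rightarrow> real) set" where
  "fiber F f m \<Theta> \<theta> = {x \<in> prob_simplex. m (min_param F f m \<Theta> x) = m \<theta>}"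

definition fisher_info ::
  "(real \<Rightarrow> real) \<Rightarrow> (real \<Rightarrow> real) \<Rightarrow> (real^'n::finite \<Rightarrow> 'a::finite \<Rightarrow> real)
     \<Rightarrow> (real^'n) set \<Rightarrow> 'n \<Rightarrow> 'n \<Rightarrow> ('a \<Rightarrow> real) \<Rightarrow> real" where
  "fisher_info F f m \<Theta> k l x =
     partial k (partial l (bregman_div F f m x)) (min_param F f m \<Theta> x)"

definition gen_exp_family ::
  "(real \<Rightarrow> real) \<Rightarrow> (real \<Rightarrow> real) \<Rightarrow> (real^'n::finite \<Rightarrow> 'a::finite \<Rightarrow> real)
     \<Rightarrow> (real^'n) set \<Rightarrow> bool" where
  "gen_exp_family F f m \<Theta> \<longleftrightarrow>
     (\<forall>\<theta>\<in>\<Theta>. \<forall>k l. \<forall>x\<in>fiber F f m \<Theta> \<theta>. \<forall>y\<in>fiber F f m \<Theta> \<theta>.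
        fisher_info F f m \<Theta> k l x = fisher_info F f m \<Theta> k l y)"

end

theory Submission
  imports Defs
begin

text \<open>
  If \<open>x\<close> lies in the fiber of \<open>\<theta>\<close>, then \<open>\<theta>\<close> minimises \<open>D(x\<parallel>\<cdot>)\<close> on the open set \<open>\<Theta>\<close>, so
  the gradient \<open>\<Sum>\<^sub>a (m\<^sub>\<theta>(a) - x(a)) \<partial>\<^sub>j f(m\<^sub>\<theta>(a))\<close> vanishes; also \<open>\<Sum>\<^sub>a (x(a) - m\<^sub>\<theta>(a)) = 0\<close>
  since both are probability vectors. By the second-order chain rule through \<open>\<eta>\<close>, the
  \<open>\<theta>\<close>-Hessian of \<open>f(m\<^sub>\<theta>(a))\<close> is the pull-back of its \<open>\<eta>\<close>-Hessian, which does not depend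
  on \<open>a\<close>, plus a combination of the first derivatives \<open>\<partial>\<^sub>j f(m\<^sub>\<theta>(a))\<close> with coefficients
  that do not depend on \<open>a\<close> either. Both parts are annihilated by the weights \<open>x - m\<^sub>\<theta>\<close>.
  Differentiating \<open>D(x\<parallel>\<cdot>)\<close> twice therefore leaves only
  \<open>\<Sum>\<^sub>a \<partial>\<^sub>k m\<^sub>\<theta>(a) \<partial>\<^sub>l f(m\<^sub>\<theta>(a)) = \<Sum>\<^sub>a f'(m\<^sub>\<theta>(a)) \<partial>\<^sub>k m\<^sub>\<theta>(a) \<partial>\<^sub>l m\<^sub>\<theta>(a)\<close>,
  which depends on \<open>\<theta>\<close> only.
\<close>

lemma partial_eqI:
  "((\<lambda>t. h (x + t *\<^sub>R axis k 1)) has_real_derivative D) (at 0) \<Longrightarrow> partial k h x = D"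
  by (simp add: partial_def DERIV_imp_deriv)

lemma has_derivative_imp_partial:
  fixes h :: "real^'n::finite \<Rightarrow> real"
  assumes "(h has_derivative H) (at x)"
  shows "((\<lambda>t. h (x + t *\<^sub>R axis k 1)) has_real_derivative H (axis k 1)) (at 0)"
    and "partial k h x = H (axis k 1)"
proof -
  have "((\<lambda>t. x + t *\<^sub>R axis k 1) has_derivative (\<lambda>t. t *\<^sub>R axis k 1)) (at 0)"
    by (auto intro!: derivative_eq_intros)
  from has_derivative_compose[OF this, of h H]
  have "((\<lambda>t. h (x + t *\<^sub>R axis k 1)) has_derivative (\<lambda>t. H (t *\<^sub>R axis k 1))) (at 0)"
    using assms by simp
  moreover have "(\<lambda>t. H (t *\<^sub>R axis k 1)) = (*) (H (axis k 1))"
    using has_derivative_linear[OF assms] by (auto simp: linear_scale)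
  ultimately show *: "((\<lambda>t. h (x + t *\<^sub>R axis k 1)) has_real_derivative H (axis k 1)) (at 0)"
    by (simp add: has_field_derivative_def)
  show "partial k h x = H (axis k 1)"
    using partial_eqI[OF *] .
qed

lemma has_real_derivative_partial:
  fixes h :: "real^'n::finite \<Rightarrow> real"
  assumes "h differentiable at x"
  shows "((\<lambda>t. h (x + t *\<^sub>R axis k 1)) has_real_derivative partial k h x) (at 0)"
  using assms has_derivative_imp_partial unfolding differentiable_def by metis

lemma open_axis_line:
  assumes "open (S :: (real^'n::finite) set)"
  shows "open {t::real. x + t *\<^sub>R axis k 1 \<in> S}"
proof -
  have "open ((\<lambda>t::real. x + t *\<^sub>R axis k 1) -` S)"
    by (rule continuous_open_vimage[OF assms]) (auto intro!: continuous_intros)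
  thus ?thesis
    by (simp add: vimage_def)
qed

lemma partial_cong_open:
  assumes "open S" "x \<in> S" "\<And>y. y \<in> S \<Longrightarrow> h1 y = h2 y"
  shows "partial k h1 x = partial k h2 x"
proof -
  have "eventually (\<lambda>t. x + t *\<^sub>R axis k 1 \<in> S) (nhds (0::real))"
    using eventually_nhds_in_open[OF open_axis_line[OF assms(1)]] assms(2) by simp
  hence "eventually (\<lambda>t. h1 (x + t *\<^sub>R axis k 1) = h2 (x + t *\<^sub>R axis k 1)) (nhds (0::real))"
    by eventually_elim (use assms(3) in auto)
  thus ?thesis
    unfolding partial_def by (intro deriv_cong_ev) auto
qed

lemma partial_const [simp]: "partial k (\<lambda>y. c) x = 0"
  by (rule partial_eqI) simp

lemma partial_diff:
  assumes "g differentiable at x" "h differentiable at x"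
  shows "partial k (\<lambda>y. g y - h y) x = partial k g x - partial k h x"
  by (rule partial_eqI) (intro DERIV_diff has_real_derivative_partial assms)

lemma partial_mult:
  assumes "g differentiable at x" "h differentiable at x"
  shows "partial k (\<lambda>y. g y * h y) x = partial k g x * h x + g x * partial k h x"
  using DERIV_mult[OF has_real_derivative_partial[OF assms(1)] has_real_derivative_partial[OF assms(2)], of k k]
  by (intro partial_eqI) (simp add: mult.commute)

lemma partial_sum:
  assumes "\<And>i. i \<in> I \<Longrightarrow> h i differentiable at x"
  shows "partial k (\<lambda>y. \<Sum>i\<in>I. h i y) x = (\<Sum>i\<in>I. partial k (h i) x)"
  by (rule partial_eqI, rule DERIV_sum) (rule has_real_derivative_partial[OF assms])

lemma partial_eq_0_at_min:
  fixes h :: "real^'n::finite \<Rightarrow> real"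
  assumes "open S" "x \<in> S" "h differentiable at x" "\<And>y. y \<in> S \<Longrightarrow> h x \<le> h y"
  shows "partial k h x = 0"
proof -
  obtain e where e: "e > 0" "ball 0 e \<subseteq> {t. x + t *\<^sub>R axis k 1 \<in> S}"
    using openE[OF open_axis_line[OF assms(1)], of 0] assms(2) by auto
  show ?thesis
  proof (rule DERIV_local_min[OF has_real_derivative_partial[OF assms(3)] e(1)], intro allI impI)
    fix t :: real
    assume "\<bar>0 - t\<bar> < e"
    with e(2) have "x + t *\<^sub>R axis k 1 \<in> S"
      by (auto simp: subset_iff dist_real_def)
    thus "h (x + 0 *\<^sub>R axis k 1) \<le> h (x + t *\<^sub>R axis k 1)"
      using assms(4) by simp
  qed
qed

lemma twice_diff_onD:
  assumes "twice_diff_on g S" "open S" "x \<in> S"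
  shows "g differentiable at x" "partial k g differentiable at x"
  using assms differentiable_on_eq_differentiable_at unfolding twice_diff_on_def by blast+

lemma has_derivative_vec_componentwise:
  fixes f :: "'b::real_normed_vector \<Rightarrow> real^'n::finite"
  assumes "\<And>i. ((\<lambda>x. f x $ i) has_derivative D i) F"
  shows "(f has_derivative (\<lambda>v. \<Sum>i\<in>UNIV. D i v *\<^sub>R axis i 1)) F"
proof -
  have "((\<lambda>x. \<Sum>i\<in>UNIV. (f x $ i) *\<^sub>R axis i (1::real)) has_derivative
          (\<lambda>v. \<Sum>i\<in>UNIV. D i v *\<^sub>R axis i 1)) F"
    by (intro has_derivative_sum has_derivative_scaleR_left assms)
  moreover have "(\<Sum>i\<in>UNIV. (v $ i) *\<^sub>R axis i (1::real)) = v" for v :: "real^'n"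
    by (simp add: vec_eq_iff sum_component axis_def if_distrib[of "\<lambda>z. _ * z"] cong: if_cong)
  ultimately show ?thesis
    by simp
qed

lemma partial_comp:
  fixes g :: "real^'n::finite \<Rightarrow> real" and \<eta> :: "real^'m::finite \<Rightarrow> real^'n"
  assumes "\<And>i. (\<lambda>y. \<eta> y $ i) differentiable at x" "g differentiable at (\<eta> x)"
  shows "(\<lambda>y. g (\<eta> y)) differentiable at x"
    and "partial l (\<lambda>y. g (\<eta> y)) x = (\<Sum>i\<in>UNIV. partial i g (\<eta> x) * partial l (\<lambda>y. \<eta> y $ i) x)"
proof -
  obtain D where D: "\<And>i. ((\<lambda>y. \<eta> y $ i) has_derivative D i) (at x)"
    using assms(1) unfolding differentiable_def by metis
  obtain G where G: "(g has_derivative G) (at (\<eta> x))"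
    using assms(2) unfolding differentiable_def by metis
  have comp: "((\<lambda>y. g (\<eta> y)) has_derivative (\<lambda>v. G (\<Sum>i\<in>UNIV. D i v *\<^sub>R axis i 1))) (at x)"
    using has_derivative_compose[OF has_derivative_vec_componentwise[OF D] G] .
  thus "(\<lambda>y. g (\<eta> y)) differentiable at x"
    unfolding differentiable_def by blast
  have "G (\<Sum>i\<in>UNIV. D i (axis l 1) *\<^sub>R axis i 1) = (\<Sum>i\<in>UNIV. D i (axis l 1) * G (axis i 1))"
    using has_derivative_linear[OF G] by (simp add: linear_sum linear_scale)
  also have "\<dots> = (\<Sum>i\<in>UNIV. partial i g (\<eta> x) * partial l (\<lambda>y. \<eta> y $ i) x)"
    using has_derivative_imp_partial(2)[OF G] has_derivative_imp_partial(2)[OF D]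
    by (simp add: mult.commute)
  finally show "partial l (\<lambda>y. g (\<eta> y)) x = (\<Sum>i\<in>UNIV. partial i g (\<eta> x) * partial l (\<lambda>y. \<eta> y $ i) x)"
    using has_derivative_imp_partial(2)[OF comp, of l] by simp
qed

lemma partial_comp_real:
  fixes h :: "real^'n::finite \<Rightarrow> real"
  assumes "\<And>t. t \<in> T \<Longrightarrow> (g has_real_derivative g' t) (at t within T)"
    and "open S" "x \<in> S" "h ` S \<subseteq> T" "h differentiable at x"
  shows "(\<lambda>y. g (h y)) differentiable at x"
    and "partial k (\<lambda>y. g (h y)) x = g' (h x) * partial k h x"
proof -
  obtain H where H: "(h has_derivative H) (at x)"
    using assms(5) unfolding differentiable_def by blast
  have "((\<lambda>y. g (h y)) has_derivative (\<lambda>v. g' (h x) * H v)) (at x within S)"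
    using has_derivative_in_compose2[OF assms(1)[unfolded has_field_derivative_def] assms(4,3)
        has_derivative_at_withinI[OF H]]
    by simp
  hence comp: "((\<lambda>y. g (h y)) has_derivative (\<lambda>v. g' (h x) * H v)) (at x)"
    using at_within_open[OF assms(3,2)] by simp
  thus "(\<lambda>y. g (h y)) differentiable at x"
    unfolding differentiable_def by blast
  show "partial k (\<lambda>y. g (h y)) x = g' (h x) * partial k h x"
    using has_derivative_imp_partial(2)[OF comp] has_derivative_imp_partial(2)[OF H] by simp
qed

lemma twice_diff_on_comp:
  fixes g :: "real^'n::finite \<Rightarrow> real" and \<eta> :: "real^'m::finite \<Rightarrow> real^'n"
  assumes "open S" "open T" "\<eta> ` S \<subseteq> T" "twice_diff_on g T"
    and "\<And>i. twice_diff_on (\<lambda>y. \<eta> y $ i) S"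
  shows "twice_diff_on (\<lambda>y. g (\<eta> y)) S"
  unfolding twice_diff_on_def differentiable_on_eq_differentiable_at[OF assms(1)]
proof (intro conjI allI ballI)
  fix x l
  assume x: "x \<in> S"
  have \<eta>x: "\<eta> x \<in> T"
    using assms(3) x by blast
  have \<eta>_diff: "\<And>i y. y \<in> S \<Longrightarrow> (\<lambda>y. \<eta> y $ i) differentiable at y"
    using twice_diff_onD(1)[OF assms(5) assms(1)] .
  show "(\<lambda>y. g (\<eta> y)) differentiable at x"
    by (rule partial_comp(1)[OF \<eta>_diff[OF x] twice_diff_onD(1)[OF assms(4,2) \<eta>x]])
  have "(\<lambda>y. \<Sum>i\<in>UNIV. partial i g (\<eta> y) * partial l (\<lambda>y. \<eta> y $ i) y) differentiable at x"
    using partial_comp(1)[OF \<eta>_diff[OF x] twice_diff_onD(2)[OF assms(4,2) \<eta>x]]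
      twice_diff_onD(2)[OF assms(5,1) x]
    by (intro differentiable_sum differentiable_mult) auto
  moreover have "partial l (\<lambda>y. g (\<eta> y)) y = (\<Sum>i\<in>UNIV. partial i g (\<eta> y) * partial l (\<lambda>y. \<eta> y $ i) y)"
    if "y \<in> S" for y
    using that assms(3) by (intro partial_comp(2) \<eta>_diff twice_diff_onD(1)[OF assms(4,2)]) auto
  ultimately show "partial l (\<lambda>y. g (\<eta> y)) differentiable at x"
    using has_derivative_transform_within_open[OF _ assms(1) x] x
    unfolding differentiable_def by (metis (no_types, lifting))
qed

lemma partial_partial_comp:
  fixes g :: "real^'n::finite \<Rightarrow> real" and \<eta> :: "real^'m::finite \<Rightarrow> real^'n"
  assumes "open S" "open T" "\<eta> ` S \<subseteq> T" "twice_diff_on g T"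
    and "\<And>i. twice_diff_on (\<lambda>y. \<eta> y $ i) S" "x \<in> S"
  shows "partial k (partial l (\<lambda>y. g (\<eta> y))) x =
    (\<Sum>i\<in>UNIV. (\<Sum>j\<in>UNIV. partial j (partial i g) (\<eta> x) * partial k (\<lambda>y. \<eta> y $ j) x)
                  * partial l (\<lambda>y. \<eta> y $ i) x
               + partial i g (\<eta> x) * partial k (partial l (\<lambda>y. \<eta> y $ i)) x)"
proof -
  have \<eta>_diff: "\<And>i y. y \<in> S \<Longrightarrow> (\<lambda>y. \<eta> y $ i) differentiable at y"
    using twice_diff_onD(1)[OF assms(5,1)] .
  have \<eta>x: "\<eta> x \<in> T"
    using assms(3,6) by blast
  have dg_\<eta>_diff: "(\<lambda>y. partial i g (\<eta> y)) differentiable at x" for i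
    by (rule partial_comp(1)[OF \<eta>_diff[OF assms(6)] twice_diff_onD(2)[OF assms(4,2) \<eta>x]])
  have "partial k (partial l (\<lambda>y. g (\<eta> y))) x
      = partial k (\<lambda>y. \<Sum>i\<in>UNIV. partial i g (\<eta> y) * partial l (\<lambda>y. \<eta> y $ i) y) x"
    using assms(3) by (intro partial_cong_open[OF assms(1,6)] partial_comp(2) \<eta>_diff
        twice_diff_onD(1)[OF assms(4,2)]) auto
  also have "\<dots> = (\<Sum>i\<in>UNIV. partial k (\<lambda>y. partial i g (\<eta> y)) x * partial l (\<lambda>y. \<eta> y $ i) x
                              + partial i g (\<eta> x) * partial k (partial l (\<lambda>y. \<eta> y $ i)) x)"
    using dg_\<eta>_diff twice_diff_onD(2)[OF assms(5,1,6)]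
    by (simp add: partial_sum partial_mult differentiable_mult)
  also have "\<dots> = (\<Sum>i\<in>UNIV. (\<Sum>j\<in>UNIV. partial j (partial i g) (\<eta> x) * partial k (\<lambda>y. \<eta> y $ j) x)
                  * partial l (\<lambda>y. \<eta> y $ i) x
               + partial i g (\<eta> x) * partial k (partial l (\<lambda>y. \<eta> y $ i)) x)"
    using \<eta>_diff[OF assms(6)] twice_diff_onD(1)[OF assms(4,2) \<eta>x]
    by (simp add: partial_comp(2) twice_diff_onD(2)[OF assms(4,2) \<eta>x])
  finally show ?thesis .
qed

lemma partial_partial_reparam:
  fixes \<phi> :: "real^'n::finite \<Rightarrow> real" and \<eta> :: "real^'n \<Rightarrow> real^'m::finite"
    and \<psi> :: "real^'m \<Rightarrow> real^'n"
  assumes "open \<Theta>" "open (\<eta> ` \<Theta>)" "\<And>\<theta>. \<theta> \<in> \<Theta> \<Longrightarrow> \<psi> (\<eta> \<theta>) = \<theta>"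
    and "twice_diff_on \<phi> \<Theta>" "\<And>i. twice_diff_on (\<lambda>\<theta>. \<eta> \<theta> $ i) \<Theta>"
    and "\<And>j. twice_diff_on (\<lambda>e. \<psi> e $ j) (\<eta> ` \<Theta>)" "\<theta> \<in> \<Theta>"
  shows "partial k (partial l \<phi>) \<theta> =
      (\<Sum>i\<in>UNIV. (\<Sum>j\<in>UNIV. partial j (partial i (\<lambda>e. \<phi> (\<psi> e))) (\<eta> \<theta>) * partial k (\<lambda>y. \<eta> y $ j) \<theta>)
                   * partial l (\<lambda>y. \<eta> y $ i) \<theta>)
    + (\<Sum>j\<in>UNIV. (\<Sum>i\<in>UNIV. partial i (\<lambda>e. \<psi> e $ j) (\<eta> \<theta>) * partial k (partial l (\<lambda>y. \<eta> y $ i)) \<theta>)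
                   * partial j \<phi> \<theta>)"
proof -
  define G where "G = (\<lambda>e. \<phi> (\<psi> e))"
  have \<psi>_range: "\<psi> ` \<eta> ` \<Theta> \<subseteq> \<Theta>"
    using assms(3) by auto
  have G_twice_diff: "twice_diff_on G (\<eta> ` \<Theta>)"
    unfolding G_def using twice_diff_on_comp[OF assms(2,1) \<psi>_range assms(4,6)] .
  have dG: "partial i G (\<eta> \<theta>) = (\<Sum>j\<in>UNIV. partial j \<phi> \<theta> * partial i (\<lambda>e. \<psi> e $ j) (\<eta> \<theta>))" for i
    using partial_comp(2)[OF twice_diff_onD(1)[OF assms(6,2)] twice_diff_onD(1)[OF assms(4,1)]]
      assms(3,7) by (simp add: G_def)
  have "partial l \<phi> y = partial l (\<lambda>y. G (\<eta> y)) y" if "y \<in> \<Theta>" for y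
    using assms(3) by (intro partial_cong_open[OF assms(1) that]) (simp add: G_def)
  hence "partial k (partial l \<phi>) \<theta> = partial k (partial l (\<lambda>y. G (\<eta> y))) \<theta>"
    by (intro partial_cong_open[OF assms(1,7)])
  also have "\<dots> = (\<Sum>i\<in>UNIV. (\<Sum>j\<in>UNIV. partial j (partial i G) (\<eta> \<theta>) * partial k (\<lambda>y. \<eta> y $ j) \<theta>)
                  * partial l (\<lambda>y. \<eta> y $ i) \<theta>
               + (\<Sum>j\<in>UNIV. partial j \<phi> \<theta> * partial i (\<lambda>e. \<psi> e $ j) (\<eta> \<theta>))
                  * partial k (partial l (\<lambda>y. \<eta> y $ i)) \<theta>)"
    unfolding dG[symmetric]
    by (rule partial_partial_comp[OF assms(1,2) _ G_twice_diff assms(5,7)]) blast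
  also have "\<dots> = (\<Sum>i\<in>UNIV. (\<Sum>j\<in>UNIV. partial j (partial i G) (\<eta> \<theta>) * partial k (\<lambda>y. \<eta> y $ j) \<theta>)
                  * partial l (\<lambda>y. \<eta> y $ i) \<theta>)
      + (\<Sum>i\<in>UNIV. \<Sum>j\<in>UNIV. partial i (\<lambda>e. \<psi> e $ j) (\<eta> \<theta>) * partial k (partial l (\<lambda>y. \<eta> y $ i)) \<theta>
                  * partial j \<phi> \<theta>)"
    by (simp add: sum.distrib sum_distrib_left sum_distrib_right mult_ac)
  finally show ?thesis
    by (subst (asm) sum.swap[of _ UNIV UNIV]) (simp add: G_def sum_distrib_right)
qed

lemma hessian_affine_in_gradient:
  fixes \<phi> :: "'a \<Rightarrow> real^'n::finite \<Rightarrow> real" and \<eta> :: "real^'n \<Rightarrow> real^'m::finite"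
    and \<psi> :: "real^'m \<Rightarrow> real^'n"
  assumes "open \<Theta>" "open (\<eta> ` \<Theta>)" "\<And>\<theta>. \<theta> \<in> \<Theta> \<Longrightarrow> \<psi> (\<eta> \<theta>) = \<theta>"
    and "\<And>a. twice_diff_on (\<phi> a) \<Theta>" "\<And>i. twice_diff_on (\<lambda>\<theta>. \<eta> \<theta> $ i) \<Theta>"
    and "\<And>j. twice_diff_on (\<lambda>e. \<psi> e $ j) (\<eta> ` \<Theta>)" "\<theta> \<in> \<Theta>"
    and "\<And>i j. \<exists>c. \<forall>a. partial j (partial i (\<lambda>e. \<phi> a (\<psi> e))) (\<eta> \<theta>) = c"
  shows "\<exists>c w. \<forall>a. partial k (partial l (\<phi> a)) \<theta> = c + (\<Sum>j\<in>UNIV. w j * partial j (\<phi> a) \<theta>)"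
proof -
  obtain H where H: "\<And>a i j. partial j (partial i (\<lambda>e. \<phi> a (\<psi> e))) (\<eta> \<theta>) = H j i"
    using assms(8) by metis
  have hessian: "partial k (partial l (\<phi> a)) \<theta> =
      (\<Sum>i\<in>UNIV. (\<Sum>j\<in>UNIV. H j i * partial k (\<lambda>y. \<eta> y $ j) \<theta>) * partial l (\<lambda>y. \<eta> y $ i) \<theta>)
    + (\<Sum>j\<in>UNIV. (\<Sum>i\<in>UNIV. partial i (\<lambda>e. \<psi> e $ j) (\<eta> \<theta>) * partial k (partial l (\<lambda>y. \<eta> y $ i)) \<theta>)
                 * partial j (\<phi> a) \<theta>)" for a
    using partial_partial_reparam[OF assms(1-3,4,5,6,7)] by (simp add: H)
  show ?thesis
    by (intro exI allI) (rule hessian)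
qed

lemma sum_mult_affine_eq_0:
  fixes d :: "'a \<Rightarrow> real"
  assumes "sum d A = 0" "\<And>j. j \<in> J \<Longrightarrow> (\<Sum>a\<in>A. d a * P a j) = 0"
  shows "(\<Sum>a\<in>A. d a * (c + (\<Sum>j\<in>J. w j * P a j))) = 0"
proof -
  have "(\<Sum>a\<in>A. d a * (c + (\<Sum>j\<in>J. w j * P a j))) = c * sum d A + (\<Sum>j\<in>J. w j * (\<Sum>a\<in>A. d a * P a j))"
    by (simp add: distrib_left sum.distrib sum_distrib_left sum_distrib_right mult_ac sum.swap[of _ A J])
  thus ?thesis
    using assms by simp
qed

lemma prob_simplex_range:
  assumes "x \<in> prob_simplex"
  shows "x a \<in> {0<..1}"
proof -
  have pos: "\<forall>b. 0 < x b" and total: "(\<Sum>b\<in>UNIV. x b) = 1"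
    using assms by (auto simp: prob_simplex_def)
  have "x a \<le> (\<Sum>b\<in>UNIV. x b)"
    by (rule member_le_sum) (use pos in \<open>auto intro: less_imp_le\<close>)
  thus ?thesis
    using pos total by auto
qed

locale bregman_model =
  fixes F f :: "real \<Rightarrow> real"
    and m :: "real^'n::finite \<Rightarrow> 'a::finite \<Rightarrow> real"
    and \<Theta> :: "(real^'n) set"
  assumes F_deriv: "\<And>t. t \<in> {0<..1} \<Longrightarrow> (F has_real_derivative f t) (at t within {0<..1})"
    and open_\<Theta>: "open \<Theta>"
    and inj_on_m: "inj_on m \<Theta>"
    and m_simplex: "\<And>\<theta>. \<theta> \<in> \<Theta> \<Longrightarrow> m \<theta> \<in> prob_simplex"
    and twice_diff_m: "\<And>a. twice_diff_on (\<lambda>\<theta>. m \<theta> a) \<Theta>"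
    and twice_diff_fm: "\<And>a. twice_diff_on (\<lambda>\<theta>. f (m \<theta> a)) \<Theta>"
    and unique_min: "\<And>x. x \<in> prob_simplex \<Longrightarrow>
          \<exists>!\<theta>. \<theta> \<in> \<Theta> \<and> (\<forall>\<theta>'\<in>\<Theta>. bregman_div F f m x \<theta> \<le> bregman_div F f m x \<theta>')"
begin

lemma m_range: "(\<lambda>\<theta>. m \<theta> a) ` \<Theta> \<subseteq> {0<..1}"
  using m_simplex prob_simplex_range by blast

lemma bregman_div_differentiable_partial:
  assumes "\<theta> \<in> \<Theta>"
  shows "bregman_div F f m x differentiable at \<theta>"
    and "partial j (bregman_div F f m x) \<theta> =
           (\<Sum>a\<in>UNIV. (m \<theta> a - x a) * partial j (\<lambda>\<theta>. f (m \<theta> a)) \<theta>)"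
proof -
  have m_diff: "(\<lambda>\<theta>. m \<theta> a) differentiable at \<theta>"
    and fm_diff: "(\<lambda>\<theta>. f (m \<theta> a)) differentiable at \<theta>" for a
    using twice_diff_onD(1)[OF twice_diff_m open_\<Theta> assms]
      twice_diff_onD(1)[OF twice_diff_fm open_\<Theta> assms] .
  note Fm = partial_comp_real[OF F_deriv open_\<Theta> assms m_range m_diff]
  have D: "bregman_div F f m x =
      (\<lambda>\<theta>. \<Sum>a\<in>UNIV. F (x a) - F (m \<theta> a) - (x a - m \<theta> a) * f (m \<theta> a))"
    by (simp add: fun_eq_iff bregman_div_def)
  show "bregman_div F f m x differentiable at \<theta>"
    unfolding D using Fm(1) m_diff fm_diff
    by (intro differentiable_sum differentiable_diff differentiable_mult differentiable_const) auto
  show "partial j (bregman_div F f m x) \<theta> =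
          (\<Sum>a\<in>UNIV. (m \<theta> a - x a) * partial j (\<lambda>\<theta>. f (m \<theta> a)) \<theta>)"
    unfolding D using Fm m_diff fm_diff
    by (simp add: partial_sum partial_diff partial_mult differentiable_diff differentiable_mult)
      (simp add: algebra_simps)
qed


lemma fiber_minimizer:
  assumes "\<theta> \<in> \<Theta>" "x \<in> fiber F f m \<Theta> \<theta>"
  shows "min_param F f m \<Theta> x = \<theta>"
    and "\<And>\<theta>'. \<theta>' \<in> \<Theta> \<Longrightarrow> bregman_div F f m x \<theta> \<le> bregman_div F f m x \<theta>'"
proof -
  have x: "x \<in> prob_simplex" and m_eq: "m (min_param F f m \<Theta> x) = m \<theta>"
    using assms(2) by (auto simp: fiber_def)
  have "min_param F f m \<Theta> x \<in> \<Theta> \<and>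
      (\<forall>\<theta>'\<in>\<Theta>. bregman_div F f m x (min_param F f m \<Theta> x) \<le> bregman_div F f m x \<theta>')"
    unfolding min_param_def by (rule theI') (rule unique_min[OF x])
  moreover from this have "min_param F f m \<Theta> x = \<theta>"
    using inj_on_m m_eq assms(1) by (auto simp: inj_on_def)
  ultimately show "min_param F f m \<Theta> x = \<theta>"
    and "\<And>\<theta>'. \<theta>' \<in> \<Theta> \<Longrightarrow> bregman_div F f m x \<theta> \<le> bregman_div F f m x \<theta>'"
    by auto
qed

lemma fiber_sum_diff_eq_0:
  assumes "\<theta> \<in> \<Theta>" "x \<in> fiber F f m \<Theta> \<theta>"
  shows "(\<Sum>a\<in>UNIV. x a - m \<theta> a) = 0"
  using assms m_simplex by (simp add: fiber_def prob_simplex_def sum_subtractf)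

lemma fiber_stationary:
  assumes "\<theta> \<in> \<Theta>" "x \<in> fiber F f m \<Theta> \<theta>"
  shows "(\<Sum>a\<in>UNIV. (x a - m \<theta> a) * partial j (\<lambda>\<theta>. f (m \<theta> a)) \<theta>) = 0"
proof -
  have "partial j (bregman_div F f m x) \<theta> = 0"
    by (rule partial_eq_0_at_min[OF open_\<Theta> assms(1) bregman_div_differentiable_partial(1)[OF assms(1)]
          fiber_minimizer(2)[OF assms]])
  thus ?thesis
    by (simp add: bregman_div_differentiable_partial(2)[OF assms(1)] left_diff_distrib sum_subtractf)
qed

lemma fisher_info_fiber:
  assumes "\<theta> \<in> \<Theta>" "x \<in> fiber F f m \<Theta> \<theta>"
  shows "fisher_info F f m \<Theta> k l x =
      (\<Sum>a\<in>UNIV. partial k (\<lambda>\<theta>. m \<theta> a) \<theta> * partial l (\<lambda>\<theta>. f (m \<theta> a)) \<theta>)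
    - (\<Sum>a\<in>UNIV. (x a - m \<theta> a) * partial k (partial l (\<lambda>\<theta>. f (m \<theta> a))) \<theta>)"
proof -
  have "fisher_info F f m \<Theta> k l x = partial k (partial l (bregman_div F f m x)) \<theta>"
    by (simp add: fisher_info_def fiber_minimizer(1)[OF assms])
  also have "\<dots> = partial k (\<lambda>y. \<Sum>a\<in>UNIV. (m y a - x a) * partial l (\<lambda>\<theta>. f (m \<theta> a)) y) \<theta>"
    by (intro partial_cong_open[OF open_\<Theta> assms(1)] bregman_div_differentiable_partial(2))
  also have "\<dots> = (\<Sum>a\<in>UNIV. partial k (\<lambda>\<theta>. m \<theta> a) \<theta> * partial l (\<lambda>\<theta>. f (m \<theta> a)) \<theta>
                     + (m \<theta> a - x a) * partial k (partial l (\<lambda>\<theta>. f (m \<theta> a))) \<theta>)"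
    using twice_diff_onD[OF twice_diff_m open_\<Theta> assms(1)] twice_diff_onD(2)[OF twice_diff_fm open_\<Theta> assms(1)]
    by (simp add: partial_sum partial_mult partial_diff differentiable_diff differentiable_mult)
  finally show ?thesis
    by (simp add: sum.distrib sum_subtractf[symmetric] algebra_simps)
qed

lemma fiber_hessian_eq_0:
  assumes "\<theta> \<in> \<Theta>" "x \<in> fiber F f m \<Theta> \<theta>"
    and "\<exists>c w. \<forall>a. partial k (partial l (\<lambda>\<theta>. f (m \<theta> a))) \<theta> =
           c + (\<Sum>j\<in>UNIV. w j * partial j (\<lambda>\<theta>. f (m \<theta> a)) \<theta>)"
  shows "(\<Sum>a\<in>UNIV. (x a - m \<theta> a) * partial k (partial l (\<lambda>\<theta>. f (m \<theta> a))) \<theta>) = 0"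
  using assms(3) sum_mult_affine_eq_0[OF fiber_sum_diff_eq_0[OF assms(1,2)] fiber_stationary[OF assms(1,2)]]
  by auto

lemma partial_f_comp_m:
  assumes "\<And>t. t \<in> {0<..1} \<Longrightarrow> (f has_real_derivative f' t) (at t within {0<..1})" "\<theta> \<in> \<Theta>"
  shows "partial l (\<lambda>\<theta>. f (m \<theta> a)) \<theta> = f' (m \<theta> a) * partial l (\<lambda>\<theta>. m \<theta> a) \<theta>"
  by (rule partial_comp_real(2)[OF assms(1) open_\<Theta> assms(2) m_range
        twice_diff_onD(1)[OF twice_diff_m open_\<Theta> assms(2)]])

end

theorem mainTheorem7:
  fixes F f f' :: "real \<Rightarrow> real"
    and m :: "real^'n::finite \<Rightarrow> 'a::finite \<Rightarrow> real"
    and \<Theta> :: "(real^'n) set"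
    and \<eta> \<psi> :: "real^'n \<Rightarrow> real^'n"
  assumes F_convex: "strict_convex_on {0<..1} F"
    and F_deriv: "\<forall>t\<in>{0<..1}. (F has_real_derivative f t) (at t within {0<..1})"
    and f_deriv: "\<forall>t\<in>{0<..1}. (f has_real_derivative f' t) (at t within {0<..1})"
    and Theta_open: "open \<Theta>"
    and m_inj: "inj_on m \<Theta>"
    and m_in: "\<forall>\<theta>\<in>\<Theta>. m \<theta> \<in> prob_simplex"
    and m_smooth: "\<forall>a. twice_diff_on (\<lambda>\<theta>. m \<theta> a) \<Theta>"
    and unique_min: "\<forall>x\<in>prob_simplex. \<exists>!\<theta>. \<theta> \<in> \<Theta> \<and>
                        (\<forall>\<theta>'\<in>\<Theta>. bregman_div F f m x \<theta> \<le> bregman_div F f m x \<theta>')"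
    and fm_smooth: "\<forall>a. twice_diff_on (\<lambda>\<theta>. f (m \<theta> a)) \<Theta>"
    and eta_open: "open (\<eta> ` \<Theta>)"
    and psi_eta: "\<forall>\<theta>\<in>\<Theta>. \<psi> (\<eta> \<theta>) = \<theta>"
    and eta_smooth: "\<forall>i. twice_diff_on (\<lambda>\<theta>. \<eta> \<theta> $ i) \<Theta>"
    and psi_smooth: "\<forall>i. twice_diff_on (\<lambda>e. \<psi> e $ i) (\<eta> ` \<Theta>)"
    and indep: "\<forall>\<theta>\<in>\<Theta>. \<forall>k l. \<exists>c. \<forall>a.
                  partial k (partial l (\<lambda>e. f (m (\<psi> e) a))) (\<eta> \<theta>) = c"
  shows "(\<forall>\<theta>\<in>\<Theta>. \<forall>x\<in>fiber F f m \<Theta> \<theta>. \<forall>k l.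
            (\<Sum>a\<in>UNIV. (x a - m \<theta> a) * partial k (partial l (\<lambda>\<theta>. f (m \<theta> a))) \<theta>) = 0)
       \<and> gen_exp_family F f m \<Theta>
       \<and> (\<forall>\<theta>\<in>\<Theta>. \<forall>x\<in>fiber F f m \<Theta> \<theta>. \<forall>k l.
            fisher_info F f m \<Theta> k l x =
              (\<Sum>a\<in>UNIV. f' (m \<theta> a) * partial k (\<lambda>\<theta>. m \<theta> a) \<theta> * partial l (\<lambda>\<theta>. m \<theta> a) \<theta>))"
proof -
  interpret bregman_model F f m \<Theta>
    using F_deriv Theta_open m_inj m_in m_smooth fm_smooth unique_min by unfold_locales auto
  have hessian_eq_0: "(\<Sum>a\<in>UNIV. (x a - m \<theta> a) * partial k (partial l (\<lambda>\<theta>. f (m \<theta> a))) \<theta>) = 0"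
    if "\<theta> \<in> \<Theta>" "x \<in> fiber F f m \<Theta> \<theta>" for \<theta> x k l
  proof (rule fiber_hessian_eq_0[OF that])
    show "\<exists>c w. \<forall>a. partial k (partial l (\<lambda>\<theta>. f (m \<theta> a))) \<theta> =
        c + (\<Sum>j\<in>UNIV. w j * partial j (\<lambda>\<theta>. f (m \<theta> a)) \<theta>)"
      using psi_eta fm_smooth eta_smooth psi_smooth indep that(1)
      by (intro hessian_affine_in_gradient[OF Theta_open eta_open]) auto
  qed
  have fisher: "fisher_info F f m \<Theta> k l x =
      (\<Sum>a\<in>UNIV. f' (m \<theta> a) * partial k (\<lambda>\<theta>. m \<theta> a) \<theta> * partial l (\<lambda>\<theta>. m \<theta> a) \<theta>)"
    if "\<theta> \<in> \<Theta>" "x \<in> fiber F f m \<Theta> \<theta>" for \<theta> x k l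
  proof -
    have "partial l (\<lambda>\<theta>. f (m \<theta> a)) \<theta> = f' (m \<theta> a) * partial l (\<lambda>\<theta>. m \<theta> a) \<theta>" for a
      using f_deriv by (intro partial_f_comp_m that(1)) auto
    thus ?thesis
      by (simp add: fisher_info_fiber[OF that] hessian_eq_0[OF that] mult_ac)
  qed
  show ?thesis
    using hessian_eq_0 fisher by (auto simp: gen_exp_family_def)
qed

end
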